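(* Let $\tau$ be a $T_1$-topology on the bicyclic monoid $\mathcal{C}(p,q)$ such that $(\mathcal{C}(p,q),\tau)$ is a topological inverse semigroup (the semigroup operation is jointly continuous and the inversion is continuous). If there exists a point $q^ip^j\in\mathcal{C}(p,q)$ such that the subspace $\updownarrow_{\preceq} q^ip^j$ of $(\mathcal{C}(p,q),\tau)$ is quasi-regular at $q^ip^j$, then $\tau$ is discrete.
   Context: The bicyclic monoid $\mathcal{C}(p,q)$ is the monoid with identity $1$ generated by two elements $p,q$ subject only to $pq=1$. Every element has a unique form $q^ip^j$ with $i,j\in\omega$, and multiplication is $q^kp^l\cdot q^mp^n = q^{k-l+m}p^n$ if $l<m$, $=q^kp^n$ if $l=m$, $=q^kp^{l-m+n}$ if $l>m$. It is an inverse semigroup with $(q^ip^j)^{-1}=q^jp^i$. The natural partial order $\preceq$ on it is: $s\preceq t$ iff $s=te$ for some idempotent $e$; equivalently $q^ip^j\preceq q^sp^t$ iff $i\ge s$ and $i-j=s-t$. For $x\in\mathcal{C}(p,q)$, $\uparrow_{\preceq}x=\{y: x\preceq y\}$, $\downarrow_{\preceq}x=\{y: y\preceq x\}$, and $\updownarrow_{\preceq}x=\uparrow_{\preceq}x\cup\downarrow_{\preceq}x$ (so $\updownarrow_{\preceq}q^ip^j=\{q^sp^t: s-t=i-j\}$). A subspace $Y$ of a topological space is quasi-regular at a point $x\in Y$ if for every open neighbourhood $U$ of $x$ in $Y$ there is a nonempty open subset $V$ of $Y$ with $\mathrm{cl}_Y(V)\subseteq U$. *)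

theory Defs
  imports "HOL-Analysis.Analysis"
begin

text \<open>Elements of the bicyclic monoid C(p,q): the pair (i,j) stands for q^i p^j.\<close>
type_synonym bicyclic = "nat \<times> nat"

definition bc_mult :: "bicyclic \<Rightarrow> bicyclic \<Rightarrow> bicyclic" where
  "bc_mult x y = (case x of (k,l) \<Rightarrow> case y of (m,n) \<Rightarrow>
     if l < m then (k + m - l, n) else if l = m then (k, n) else (k, l - m + n))"

definition bc_inv :: "bicyclic \<Rightarrow> bicyclic" where
  "bc_inv x = (case x of (i,j) \<Rightarrow> (j,i))"

definition bc_idempotent :: "bicyclic \<Rightarrow> bool" where
  "bc_idempotent e \<longleftrightarrow> bc_mult e e = e"

definition bc_le :: "bicyclic \<Rightarrow> bicyclic \<Rightarrow> bool" where
  "bc_le s t \<longleftrightarrow> (\<exists>e. bc_idempotent e \<and> s = bc_mult t e)"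

definition bc_updown :: "bicyclic \<Rightarrow> bicyclic set" where
  "bc_updown x = {y. bc_le x y} \<union> {y. bc_le y x}"

definition quasi_regular_at :: "'a topology \<Rightarrow> 'a \<Rightarrow> bool" where
  "quasi_regular_at Y x \<longleftrightarrow>
     (\<forall>U. openin Y U \<and> x \<in> U \<longrightarrow>
        (\<exists>V. openin Y V \<and> V \<noteq> {} \<and> Y closure_of V \<subseteq> U))"

end

theory Submission
  imports Defs
begin

text \<open>
  Suppose \<tau> is not discrete, and write e_n = q^n p^n. Every open set containing an idempotent
  then contains infinitely many idempotents: otherwise, after removing finitely many points
  (\<tau> is T1), an open set U contains exactly one idempotent e_m, and conjugating y y^-1 and
  y^-1 y by q^m pulls U back to the isolated point 1; since y \<mapsto> p^i y q^j is finite-to-one and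
  sends q^i p^j to 1, every point would then be isolated.

  For fixed x, joint continuity of multiplication at (x e_n, e_m) with n \<ge> m, where the
  product is x e_n, together with this abundance of idempotents near e_m shows that any two
  open sets meeting the down-set x E of x meet inside it. The set \<updown>q^i p^j is such a down-set,
  so in this infinite T1 subspace the closure of every nonempty open set is the whole subspace,
  which contradicts quasi-regularity.
\<close>

definition hyperconnected_space :: "'a topology \<Rightarrow> bool" where
  "hyperconnected_space X \<longleftrightarrow>
     (\<forall>U V. openin X U \<longrightarrow> openin X V \<longrightarrow> U \<noteq> {} \<longrightarrow> V \<noteq> {} \<longrightarrow> U \<inter> V \<noteq> {})"

lemma not_quasi_regular_at_if_hyperconnected:
  assumes "t1_space X" and "hyperconnected_space X"
    and "x \<in> topspace X" and "z \<in> topspace X" and "z \<noteq> x"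
  shows "\<not> quasi_regular_at X x"
proof
  assume "quasi_regular_at X x"
  moreover have "openin X (topspace X - {z})"
    using assms(1) by (simp add: t1_space_openin_delete_alt)
  ultimately obtain V where V: "openin X V" "V \<noteq> {}" "X closure_of V \<subseteq> topspace X - {z}"
    using assms(3,5) unfolding quasi_regular_at_def by blast
  have "X closure_of V = topspace X"
    unfolding dense_intersects_open using assms(2) V(1,2) by (auto simp: hyperconnected_space_def)
  then show False
    using V(3) assms(4) by blast
qed

lemma bc_mult_Pair:
  "bc_mult (k, l) (m, n) =
     (if l < m then (k + m - l, n) else if l = m then (k, n) else (k, l - m + n))"
  by (simp add: bc_mult_def)

lemma bc_inv_Pair [simp]: "bc_inv (i, j) = (j, i)"
  by (simp add: bc_inv_def)

lemma bc_idempotent_Pair_iff: "bc_idempotent (m, n) \<longleftrightarrow> m = n"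
  by (auto simp: bc_idempotent_def bc_mult_Pair split: if_splits)

lemma bc_le_iff_mult_idempotent: "bc_le y x \<longleftrightarrow> (\<exists>n. y = bc_mult x (n, n))"
  unfolding bc_le_def by (metis bc_idempotent_Pair_iff surj_pair)

lemma bc_le_Pair_iff: "bc_le (s, t) (a, b) \<longleftrightarrow> b \<le> t \<and> s + b = a + t"
proof
  assume "bc_le (s, t) (a, b)"
  then obtain n where "(s, t) = bc_mult (a, b) (n, n)"
    by (auto simp: bc_le_iff_mult_idempotent)
  then show "b \<le> t \<and> s + b = a + t"
    by (auto simp: bc_mult_Pair split: if_splits)
next
  assume "b \<le> t \<and> s + b = a + t"
  then have "(s, t) = bc_mult (a, b) (t, t)"
    by (auto simp: bc_mult_Pair)
  then show "bc_le (s, t) (a, b)"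
    by (auto simp: bc_le_iff_mult_idempotent)
qed

lemma bc_updown_eq_down_set: "bc_updown (i, j) = {y. bc_le y (i - min i j, j - min i j)}"
  unfolding bc_updown_def by (force simp: bc_le_Pair_iff)

lemma bc_mult_idempotents:
  "bc_mult (bc_mult x (n, n)) (k, k) = bc_mult x (max n k, max n k)"
  by (cases x) (auto simp: bc_mult_Pair max_def)

locale bicyclic_topological_semigroup =
  fixes \<tau> :: "bicyclic topology"
  assumes topspace_eq [simp]: "topspace \<tau> = UNIV"
    and continuous_bc_mult: "continuous_map (prod_topology \<tau> \<tau>) \<tau> (\<lambda>(x, y). bc_mult x y)"
begin

lemma continuous_map_bc_mult:
  assumes "continuous_map \<tau> \<tau> f" and "continuous_map \<tau> \<tau> g"
  shows "continuous_map \<tau> \<tau> (\<lambda>y. bc_mult (f y) (g y))"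
  using continuous_map_compose[OF continuous_map_pairedI[OF assms] continuous_bc_mult]
  by (simp add: o_def)

lemma openin_vimage:
  assumes "continuous_map \<tau> \<tau> f" and "openin \<tau> U"
  shows "openin \<tau> (f -` U)"
  using openin_continuous_map_preimage[OF assms] by (simp add: vimage_def)

lemma discrete_if_openin_identity:
  assumes "t1_space \<tau>" and identity_open: "openin \<tau> {(0, 0)}"
  shows "\<tau> = discrete_topology UNIV"
proof -
  have "openin \<tau> {(i, j)}" for i j
  proof -
    let ?h = "\<lambda>y. bc_mult (bc_mult (0, i) y) (j, 0)"
    have "openin \<tau> (?h -` {(0, 0)})"
      by (intro openin_vimage identity_open continuous_map_bc_mult) auto
    moreover have fibre: "?h -` {(0, 0)} \<subseteq> {..i} \<times> {..j}"
      by (auto simp: bc_mult_Pair split: if_splits)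
    ultimately have "openin \<tau> (?h -` {(0, 0)} - ({..i} \<times> {..j} - {(i, j)}))"
      using assms(1) by (simp add: openin_diff t1_space_closedin_finite)
    moreover have "?h -` {(0, 0)} - ({..i} \<times> {..j} - {(i, j)}) = {(i, j)}"
      using fibre by (auto simp: bc_mult_Pair)
    ultimately show ?thesis
      by simp
  qed
  then show ?thesis
    by (metis discrete_topology_unique surj_pair topspace_eq)
qed

lemma common_point_on_down_set:
  assumes idempotents_infinite: "\<And>U m. openin \<tau> U \<Longrightarrow> (m, m) \<in> U \<Longrightarrow> infinite {n. (n, n) \<in> U}"
    and "openin \<tau> V" "openin \<tau> W"
    and "bc_mult x (c, c) \<in> V" "bc_mult x (m, m) \<in> W"
  shows "\<exists>k. bc_mult x (k, k) \<in> V \<inter> W"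
proof -
  have far_idempotent: "\<exists>n\<ge>N. (n, n) \<in> U" if "openin \<tau> U" "(l, l) \<in> U" for U l N
    using idempotents_infinite[OF that] by (simp add: infinite_nat_iff_unbounded_le)
  let ?g = "\<lambda>y. bc_mult x y"
  have g: "continuous_map \<tau> \<tau> ?g"
    by (intro continuous_map_bc_mult) auto
  obtain n where n: "n \<ge> m" "bc_mult x (n, n) \<in> V"
    using far_idempotent[OF openin_vimage[OF g \<open>openin \<tau> V\<close>]] assms(4) by auto
  have mult_vimage_open: "openin (prod_topology \<tau> \<tau>) ((\<lambda>(y, z). bc_mult y z) -` V)"
    using openin_continuous_map_preimage[OF continuous_bc_mult \<open>openin \<tau> V\<close>]
    by (simp add: vimage_def)
  have "(bc_mult x (n, n), (m, m)) \<in> (\<lambda>(y, z). bc_mult y z) -` V"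
    using n by (simp add: bc_mult_idempotents max_absorb1)
  then have "\<exists>A B. openin \<tau> A \<and> openin \<tau> B \<and> bc_mult x (n, n) \<in> A \<and> (m, m) \<in> B \<and>
      A \<times> B \<subseteq> (\<lambda>(y, z). bc_mult y z) -` V"
    by (rule openin_prod_topology_alt[THEN iffD1, rule_format, OF mult_vimage_open])
  then obtain A B where AB: "openin \<tau> B" "bc_mult x (n, n) \<in> A" "(m, m) \<in> B"
      "A \<times> B \<subseteq> (\<lambda>(y, z). bc_mult y z) -` V"
    by (elim exE conjE)
  have "openin \<tau> (B \<inter> ?g -` W)"
    using AB(1) openin_vimage[OF g \<open>openin \<tau> W\<close>] by blast
  then obtain k where k: "k \<ge> n" "(k, k) \<in> B" "bc_mult x (k, k) \<in> W"
    using far_idempotent[of "B \<inter> ?g -` W" m] AB(3) assms(5) by auto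
  have "(bc_mult x (n, n), (k, k)) \<in> (\<lambda>(y, z). bc_mult y z) -` V"
    using AB(2,4) k(2) by (meson SigmaI subsetD)
  then have "bc_mult x (k, k) \<in> V"
    using k(1) by (simp add: bc_mult_idempotents max_absorb2)
  with k(3) show ?thesis
    by blast
qed

lemma hyperconnected_down_set:
  assumes "\<And>U m. openin \<tau> U \<Longrightarrow> (m, m) \<in> U \<Longrightarrow> infinite {n. (n, n) \<in> U}"
  shows "hyperconnected_space (subtopology \<tau> {y. bc_le y x})"
  unfolding hyperconnected_space_def
proof (intro allI impI)
  fix U' W'
  assume "openin (subtopology \<tau> {y. bc_le y x}) U'" "openin (subtopology \<tau> {y. bc_le y x}) W'"
    and "U' \<noteq> {}" "W' \<noteq> {}"
  then obtain V W c m where VW: "openin \<tau> V" "openin \<tau> W"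
    and U'W': "U' = V \<inter> {y. bc_le y x}" "W' = W \<inter> {y. bc_le y x}"
    and "bc_mult x (c, c) \<in> V" "bc_mult x (m, m) \<in> W"
    unfolding openin_subtopology bc_le_iff_mult_idempotent by blast
  then obtain k where "bc_mult x (k, k) \<in> V \<inter> W"
    using common_point_on_down_set[where V = V and W = W and x = x and c = c and m = m] assms VW
    by blast
  then show "U' \<inter> W' \<noteq> {}"
    unfolding U'W' bc_le_iff_mult_idempotent by blast
qed

end

locale bicyclic_topological_inverse_semigroup = bicyclic_topological_semigroup +
  assumes t1: "t1_space \<tau>"
    and continuous_bc_inv: "continuous_map \<tau> \<tau> bc_inv"
begin

lemma openin_identity_if_finitely_many_idempotents:
  assumes "openin \<tau> U" and "(m, m) \<in> U" and "finite {n. (n, n) \<in> U}"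
  shows "openin \<tau> {(0, 0)}"
proof -
  define U' where "U' = U - (\<lambda>n. (n, n)) ` ({n. (n, n) \<in> U} - {m})"
  have "openin \<tau> U'"
    unfolding U'_def using assms(1,3) t1 by (simp add: openin_diff t1_space_closedin_finite)
  have idempotent_in_U': "(n, n) \<in> U' \<longleftrightarrow> n = m" for n
    using assms(2) by (auto simp: U'_def)
  define F where "F y = bc_mult (bc_mult (m, 0) (bc_mult y (bc_inv y))) (0, m)" for y
  define G where "G y = bc_mult (bc_mult (m, 0) (bc_mult (bc_inv y) y)) (0, m)" for y
  have "continuous_map \<tau> \<tau> F" "continuous_map \<tau> \<tau> G"
    unfolding F_def G_def by (intro continuous_map_bc_mult continuous_bc_inv; simp)+
  then have open_vimages: "openin \<tau> (F -` U' \<inter> G -` U')"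
    using \<open>openin \<tau> U'\<close> by (intro openin_Int openin_vimage)
  have "F (s, t) = (m + s, m + s)" "G (s, t) = (m + t, m + t)" for s t
    unfolding F_def G_def by (auto simp: bc_mult_Pair)
  then have "F -` U' \<inter> G -` U' = {(0, 0)}"
    by (auto simp: idempotent_in_U')
  with open_vimages show ?thesis
    by simp
qed

lemma infinitely_many_idempotents_if_not_discrete:
  assumes "\<tau> \<noteq> discrete_topology UNIV" and "openin \<tau> U" and "(m, m) \<in> U"
  shows "infinite {n. (n, n) \<in> U}"
  using openin_identity_if_finitely_many_idempotents[OF assms(2,3)]
    discrete_if_openin_identity[OF t1] assms(1)
  by blast

end

theorem theorem2:
  fixes \<tau> :: "bicyclic topology"
  assumes "topspace \<tau> = UNIV"
    and "t1_space \<tau>"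
    and "continuous_map (prod_topology \<tau> \<tau>) \<tau> (\<lambda>(x, y). bc_mult x y)"
    and "continuous_map \<tau> \<tau> bc_inv"
    and "\<exists>i j. quasi_regular_at (subtopology \<tau> (bc_updown (i, j))) (i, j)"
  shows "\<tau> = discrete_topology UNIV"
proof (rule ccontr)
  assume not_discrete: "\<tau> \<noteq> discrete_topology UNIV"
  interpret bicyclic_topological_inverse_semigroup \<tau>
    using assms(1-4) by unfold_locales
  obtain i j where quasi_regular: "quasi_regular_at (subtopology \<tau> (bc_updown (i, j))) (i, j)"
    using assms(5) by blast
  have "hyperconnected_space (subtopology \<tau> (bc_updown (i, j)))"
    unfolding bc_updown_eq_down_set
    using hyperconnected_down_set infinitely_many_idempotents_if_not_discrete[OF not_discrete]
    by blast
  moreover have "(i, j) \<in> bc_updown (i, j)" "(Suc i, Suc j) \<in> bc_updown (i, j)"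
    by (auto simp: bc_updown_eq_down_set bc_le_Pair_iff)
  ultimately show False
    using not_quasi_regular_at_if_hyperconnected[OF t1_space_subtopology[OF t1]] quasi_regular
    by fastforce
qed

end
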